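(* There exists a hereditary subshift $X\subseteq\{0,1\}^{\mathbb{N}}$ whose factor complexity is sublinear (the number of words of length $n$ in its language is $\mathcal{O}(n)$) and which has infinite coding dimension.
   Context: Subshift: closed shift-invariant subset of $\{0,1\}^{\mathbb{N}}$. $X$ is hereditary if whenever $\mathbf{y}\in X$ and $\mathbf{x}\le\mathbf{y}$ coordinatewise (with $0<1$), then $\mathbf{x}\in X$. Infinite coding dimension means there is no $d\in\mathbb{N}$ with $\sum_i x_i\le d$ for all $\mathbf{x}\in X$. *)

theory Defs
  imports "HOL-Analysis.Analysis"
begin

text \<open>Points of {0,1}^N are modelled as nat => bool (False = 0, True = 1);
  the coordinatewise order is the pointwise order on functions (False < True).\<close>

definition shift :: "(nat \<Rightarrow> bool) \<Rightarrow> (nat \<Rightarrow> bool)" where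
  "shift x = (\<lambda>n. x (Suc n))"

definition cantor_top :: "(nat \<Rightarrow> bool) topology" where
  "cantor_top = product_topology (\<lambda>_. discrete_topology UNIV) UNIV"

definition subshift :: "(nat \<Rightarrow> bool) set \<Rightarrow> bool" where
  "subshift X \<longleftrightarrow> closedin cantor_top X \<and> shift ` X \<subseteq> X"

definition hereditary :: "(nat \<Rightarrow> bool) set \<Rightarrow> bool" where
  "hereditary X \<longleftrightarrow> (\<forall>y\<in>X. \<forall>x. x \<le> y \<longrightarrow> x \<in> X)"

definition lang :: "(nat \<Rightarrow> bool) set \<Rightarrow> nat \<Rightarrow> bool list set" where
  "lang X n = {map (\<lambda>i. x (k + i)) [0..<n] | x k. x \<in> X}"

definition complexity :: "(nat \<Rightarrow> bool) set \<Rightarrow> nat \<Rightarrow> nat" where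
  "complexity X n = card (lang X n)"

definition infinite_coding_dimension :: "(nat \<Rightarrow> bool) set \<Rightarrow> bool" where
  "infinite_coding_dimension X \<longleftrightarrow>
     \<not> (\<exists>d::nat. \<forall>x\<in>X. finite {i. x i} \<and> card {i. x i} \<le> d)"

end

theory Submission
  imports Defs
begin

text \<open>Fix the lacunary set A = {lac 0 < lac 1 < ...} with lac (k+1) = 2^(k+3) lac k, and let
  X be the set of points whose support fits into some translate A - s. Shifting and lowering
  ones keep such a point in X, and since A is infinite every point with at most one 1 lies in X.
  A point outside X has two ones i < j; lacunarity leaves only finitely many s with i + s and
  j + s in A, each excluded by a further coordinate, so X is closed. The indicator of A lies in
  X, hence the coding dimension is infinite. A window of length n containing two ones sees two
  elements of A at distance below n, which forces the translate and the pattern of ones into a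
  set of size O(n), because the gaps of A grow faster than the elements before them.\<close>

lemma topspace_cantor_top [simp]: "topspace cantor_top = UNIV"
  by (simp add: cantor_top_def topspace_product_topology PiE_UNIV_domain)

lemma openin_cantor_top_coordinate: "openin cantor_top {y. y j = b}"
proof -
  have "openin cantor_top {y \<in> topspace cantor_top. y j \<in> {b}}"
    unfolding cantor_top_def
    by (rule openin_continuous_map_preimage[OF continuous_map_product_projection]) auto
  then show ?thesis by simp
qed

lemma openin_cantor_top_cylinder:
  assumes "finite F"
  shows "openin cantor_top {y. \<forall>i\<in>F. y i = x i}"
  using assms
proof (induction F rule: finite_induct)
  case empty
  then show ?case using openin_topspace[of cantor_top] by simp
next
  case (insert j F)
  have "{y. \<forall>i\<in>insert j F. y i = x i} = {y. y j = x j} \<inter> {y. \<forall>i\<in>F. y i = x i}"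
    by auto
  then show ?case using openin_Int[OF openin_cantor_top_coordinate insert.IH] by simp
qed

lemma closedin_cantor_topI:
  assumes "\<And>x. x \<notin> X \<Longrightarrow> \<exists>F. finite F \<and> (\<forall>y. (\<forall>i\<in>F. y i = x i) \<longrightarrow> y \<notin> X)"
  shows "closedin cantor_top X"
  unfolding closedin_def topspace_cantor_top
proof
  show "openin cantor_top (UNIV - X)"
  proof (subst openin_subopen, intro ballI)
    fix x assume "x \<in> UNIV - X"
    then have "x \<notin> X" by simp
    from assms[OF this] obtain F
      where F: "finite F" "\<forall>y. (\<forall>i\<in>F. y i = x i) \<longrightarrow> y \<notin> X"
      by (elim exE conjE)
    show "\<exists>T. openin cantor_top T \<and> x \<in> T \<and> T \<subseteq> UNIV - X"
    proof (intro exI conjI)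
      show "openin cantor_top {y. \<forall>i\<in>F. y i = x i}"
        using openin_cantor_top_cylinder[OF F(1)] .
      show "{y. \<forall>i\<in>F. y i = x i} \<subseteq> UNIV - X"
        using F(2) by auto
    qed simp
  qed
qed simp

definition translate_subsets :: "nat set \<Rightarrow> (nat \<Rightarrow> bool) set" where
  "translate_subsets A = {x. \<exists>s. \<forall>i. x i \<longrightarrow> i + s \<in> A}"

lemma shift_translate_subsets: "shift ` translate_subsets A \<subseteq> translate_subsets A"
proof
  fix z assume "z \<in> shift ` translate_subsets A"
  then obtain x s where z: "z = shift x" and s: "\<forall>i. x i \<longrightarrow> i + s \<in> A"
    unfolding translate_subsets_def by auto
  have "\<forall>i. z i \<longrightarrow> i + Suc s \<in> A"
    using s by (metis add_Suc add_Suc_right shift_def z)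
  then show "z \<in> translate_subsets A"
    unfolding translate_subsets_def by blast
qed

lemma hereditary_translate_subsets: "hereditary (translate_subsets A)"
  unfolding hereditary_def translate_subsets_def by (auto simp: le_fun_def)

lemma translate_subsets_at_most_one:
  assumes "infinite A" and "\<not> (\<exists>i j. i < j \<and> x i \<and> x j)"
  shows "x \<in> translate_subsets A"
proof (cases "\<exists>i. x i")
  case True
  then obtain i where i: "x i" by blast
  then have unique: "x l \<Longrightarrow> l = i" for l
    using assms(2) by (metis linorder_neqE_nat)
  obtain t where "t \<in> A" "i \<le> t"
    using assms(1) infinite_nat_iff_unbounded_le by blast
  then have "\<forall>l. x l \<longrightarrow> l + (t - i) \<in> A"
    using unique by auto
  then show ?thesis unfolding translate_subsets_def by blast
next
  case False
  then show ?thesis unfolding translate_subsets_def by auto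
qed

lemma closedin_translate_subsets:
  assumes "infinite A" and finite_diff: "\<And>d. 0 < d \<Longrightarrow> finite {t \<in> A. t + d \<in> A}"
  shows "closedin cantor_top (translate_subsets A)"
proof (rule closedin_cantor_topI)
  fix x assume x: "x \<notin> translate_subsets A"
  then obtain i j where ij: "i < j" "x i" "x j"
    using translate_subsets_at_most_one[OF assms(1)] by blast
  define D where "D = {s. i + s \<in> A \<and> j + s \<in> A}"
  have "D \<subseteq> (\<lambda>t. t - i) ` {t \<in> A. t + (j - i) \<in> A}"
  proof
    fix s assume "s \<in> D"
    then show "s \<in> (\<lambda>t. t - i) ` {t \<in> A. t + (j - i) \<in> A}"
      using ij(1) unfolding D_def by (intro image_eqI[of _ _ "i + s"]) (auto simp: add.commute)
  qed
  then have "finite D"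
    using finite_diff ij(1) by (meson finite_imageI finite_subset zero_less_diff)
  have "\<exists>l. x l \<and> l + s \<notin> A" for s
    using x unfolding translate_subsets_def by blast
  then obtain l where l: "\<And>s. x (l s) \<and> l s + s \<notin> A"
    by metis
  show "\<exists>F. finite F \<and> (\<forall>y. (\<forall>k\<in>F. y k = x k) \<longrightarrow> y \<notin> translate_subsets A)"
  proof (intro exI conjI allI impI)
    show "finite ({i, j} \<union> l ` D)" using \<open>finite D\<close> by simp
    fix y assume agree: "\<forall>k\<in>{i, j} \<union> l ` D. y k = x k"
    show "y \<notin> translate_subsets A"
    proof
      assume "y \<in> translate_subsets A"
      then obtain s where s: "\<And>k. y k \<Longrightarrow> k + s \<in> A"
        unfolding translate_subsets_def by blast
      have "s \<in> D" using s agree ij unfolding D_def by simp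
      then have "y (l s)" using agree l by simp
      then show False using s l by blast
    qed
  qed
qed

lemma subshift_translate_subsets:
  assumes "infinite A" and "\<And>d. 0 < d \<Longrightarrow> finite {t \<in> A. t + d \<in> A}"
  shows "subshift (translate_subsets A)"
  unfolding subshift_def
  using closedin_translate_subsets[OF assms] shift_translate_subsets by blast

lemma infinite_coding_dimension_translate_subsets:
  assumes "infinite A"
  shows "infinite_coding_dimension (translate_subsets A)"
  unfolding infinite_coding_dimension_def
proof
  assume "\<exists>d::nat. \<forall>x\<in>translate_subsets A. finite {i. x i} \<and> card {i. x i} \<le> d"
  moreover have "(\<lambda>i. i \<in> A) \<in> translate_subsets A"
    unfolding translate_subsets_def by (intro CollectI exI[of _ 0]) simp
  ultimately show False using assms by auto
qed

fun lac :: "nat \<Rightarrow> nat" where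
  "lac 0 = 1"
| "lac (Suc k) = 2 ^ (k + 3) * lac k"

definition gap :: "nat \<Rightarrow> nat" where
  "gap k = lac (Suc k) - lac k"

lemma lac_pos: "1 \<le> lac k"
  by (induction k) auto

lemma lac_Suc_ge_double: "2 * lac k \<le> lac (Suc k)"
proof -
  have "(2::nat) \<le> 2 ^ (k + 3)" using power_increasing[of 1 "k + 3" "2::nat"] by simp
  then show ?thesis using mult_le_mono1 by simp
qed

declare lac.simps(2) [simp del]

lemma strict_mono_lac: "strict_mono lac"
proof (rule strict_monoI_Suc)
  fix n show "lac n < lac (Suc n)" using lac_Suc_ge_double[of n] lac_pos[of n] by linarith
qed

lemma lac_ge: "k \<le> lac k"
  using strict_mono_lac by (rule strict_mono_imp_increasing)

lemma lac_double_le: "p < q \<Longrightarrow> 2 * lac p \<le> lac q"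
  using lac_Suc_ge_double[of p] strict_mono_less_eq[OF strict_mono_lac, of "Suc p" q] by simp

lemma gap_ge_lac: "lac k \<le> gap k"
  using lac_Suc_ge_double[of k] unfolding gap_def by simp

lemma mono_gap: "mono gap"
proof (unfold mono_iff_le_Suc, intro allI)
  fix n
  show "gap n \<le> gap (Suc n)"
    using lac_Suc_ge_double[of n] lac_Suc_ge_double[of "Suc n"] unfolding gap_def by linarith
qed

lemma finite_lac_differences:
  assumes "0 < d"
  shows "finite {t \<in> range lac. t + d \<in> range lac}"
proof (rule finite_subset[of _ "{..d}"])
  show "{t \<in> range lac. t + d \<in> range lac} \<subseteq> {..d}"
  proof
    fix t assume "t \<in> {t \<in> range lac. t + d \<in> range lac}"
    then obtain p q where p: "t = lac p" and q: "t + d = lac q" by blast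
    then have "p < q" using assms strict_mono_less[OF strict_mono_lac] by (metis less_add_same_cancel1)
    then show "t \<in> {..d}" using lac_double_le p q by fastforce
  qed
qed simp

definition gap_index :: "nat \<Rightarrow> nat" where
  "gap_index n = (LEAST k. n \<le> gap k)"

lemma le_gap_gap_index: "n \<le> gap (gap_index n)"
  unfolding gap_index_def by (rule LeastI[of _ n]) (use gap_ge_lac lac_ge le_trans in blast)

lemma gap_less_before_gap_index: "m < gap_index n \<Longrightarrow> gap m < n"
  unfolding gap_index_def using not_less_Least by (metis not_le)

definition single_one_words :: "nat \<Rightarrow> bool list set" where
  "single_one_words n = (\<lambda>j. map (\<lambda>i. i = j) [0..<n]) ` {..n}"

definition lac_window_words :: "nat \<Rightarrow> bool list set" where
  "lac_window_words n = (\<lambda>(t, S). map (\<lambda>i. i + t \<in> lac ` S) [0..<n]) `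
     ({..lac (gap_index n - 1)} \<times> Pow {..gap_index n})"

lemma word_in_single_one_words:
  assumes "\<not> (\<exists>i j. i < j \<and> j < n \<and> x (k + i) \<and> x (k + j))"
  shows "map (\<lambda>i. x (k + i)) [0..<n] \<in> single_one_words n"
proof (cases "\<exists>i<n. x (k + i)")
  case True
  then obtain i where i: "i < n" "x (k + i)" by blast
  have "map (\<lambda>i. x (k + i)) [0..<n] = map (\<lambda>l. l = i) [0..<n]"
    unfolding map_eq_conv using assms i by (metis atLeastLessThan_iff linorder_neqE_nat set_upt)
  then show ?thesis unfolding single_one_words_def using i by auto
next
  case False
  then have "map (\<lambda>i. x (k + i)) [0..<n] = map (\<lambda>l. l = n) [0..<n]" by auto
  then show ?thesis unfolding single_one_words_def by (intro image_eqI[of _ _ n]) auto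
qed

text \<open>Two ones at distance below n sit at lac p and lac q with gap p < n, so p < gap_index n;
  this bounds the translate, and all ones of the window then lie below lac (Suc (gap_index n)).\<close>

lemma word_in_lac_window_words:
  assumes x: "\<And>i. x (k + i) \<Longrightarrow> i + t \<in> range lac"
    and ij: "i < j" "j < n" "x (k + i)" "x (k + j)"
  shows "map (\<lambda>i. x (k + i)) [0..<n] \<in> lac_window_words n"
proof -
  let ?K = "gap_index n"
  obtain p where p: "lac p = i + t" using x[OF ij(3)] by auto
  obtain q where q: "lac q = j + t" using x[OF ij(4)] by auto
  have "lac p < lac q" using p q ij(1) by simp
  then have "p < q" using strict_mono_less[OF strict_mono_lac] by blast
  then have "lac (Suc p) \<le> lac q" using strict_mono_less_eq[OF strict_mono_lac] by simp
  then have "gap p < n" using p q ij unfolding gap_def by linarith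
  then have "p < ?K" using le_gap_gap_index[of n] monoD[OF mono_gap, of ?K p] by linarith
  then have "lac p \<le> lac (?K - 1)" using strict_mono_less_eq[OF strict_mono_lac] by simp
  then have t_le: "t \<le> lac (?K - 1)" using p by simp
  have "lac (?K - 1) \<le> lac ?K" using strict_mono_less_eq[OF strict_mono_lac] by simp
  then have window_below: "i' + t < lac (Suc ?K)" if "i' < n" for i'
    using that t_le le_gap_gap_index[of n] lac_Suc_ge_double[of ?K] unfolding gap_def by linarith
  define S where "S = {r. r \<le> ?K \<and> (\<exists>i<n. x (k + i) \<and> lac r = i + t)}"
  have "map (\<lambda>i. x (k + i)) [0..<n] = map (\<lambda>i. i + t \<in> lac ` S) [0..<n]"
    unfolding map_eq_conv
  proof
    fix i assume "i \<in> set [0..<n]"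
    then have i: "i < n" by simp
    show "x (k + i) = (i + t \<in> lac ` S)"
    proof
      assume xi: "x (k + i)"
      then obtain r where r: "lac r = i + t" using x by force
      then have "lac r < lac (Suc ?K)" using window_below[OF i] by simp
      then have "r \<le> ?K" using strict_mono_less[OF strict_mono_lac] less_Suc_eq_le by blast
      then show "i + t \<in> lac ` S" using r i xi unfolding S_def by force
    qed (auto simp: S_def)
  qed
  moreover have "(t, S) \<in> {..lac (?K - 1)} \<times> Pow {..?K}" using t_le unfolding S_def by auto
  ultimately show ?thesis
    unfolding lac_window_words_def by (intro image_eqI[of _ _ "(t, S)"]) simp_all
qed

lemma lang_subset_words:
  "lang (translate_subsets (range lac)) n \<subseteq> single_one_words n \<union> lac_window_words n"
proof
  fix w assume "w \<in> lang (translate_subsets (range lac)) n"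
  then obtain x k s where w: "w = map (\<lambda>i. x (k + i)) [0..<n]"
    and s: "\<forall>i. x i \<longrightarrow> i + s \<in> range lac"
    unfolding lang_def translate_subsets_def by auto
  have x: "x (k + i) \<Longrightarrow> i + (k + s) \<in> range lac" for i
    using s[rule_format, of "k + i"] by (simp add: ac_simps)
  show "w \<in> single_one_words n \<union> lac_window_words n"
    using word_in_single_one_words word_in_lac_window_words[OF x] unfolding w by blast
qed

text \<open>By the choice of gap_index, lac (gap_index n) \<le> 2 gap (gap_index n - 1) < 2n, and the
  factor 2^(k+3) in the recursion absorbs the 2^(gap_index n + 1) patterns.\<close>

lemma card_lac_window_words: "1 \<le> n \<Longrightarrow> card (lac_window_words n) \<le> 4 * n"
proof -
  assume n: "1 \<le> n"
  let ?K = "gap_index n"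
  have "card (lac_window_words n) \<le> (lac (?K - 1) + 1) * 2 ^ (?K + 1)"
    unfolding lac_window_words_def
    using card_image_le[of "{..lac (?K - 1)} \<times> Pow {..?K}"]
    by (simp add: card_cartesian_product card_Pow)
  also have "\<dots> \<le> 4 * n"
  proof (cases ?K)
    case 0
    then show ?thesis using n by simp
  next
    case (Suc m)
    have "(lac m + 1) * 2 ^ (m + 2) \<le> (2 * lac m) * 2 ^ (m + 2)" using lac_pos[of m] by simp
    also have "\<dots> = lac (Suc m)" by (simp add: lac.simps power_add)
    also have "\<dots> \<le> 2 * gap m" using lac_Suc_ge_double[of m] unfolding gap_def by simp
    finally show ?thesis using Suc gap_less_before_gap_index[of m n] by simp
  qed
  finally show ?thesis .
qed

lemma complexity_translate_subsets_lac:
  assumes "1 \<le> n"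
  shows "complexity (translate_subsets (range lac)) n \<le> 6 * n"
proof -
  have card_single: "card (single_one_words n) \<le> n + 1"
    unfolding single_one_words_def using card_image_le[of "{..n}"] by fastforce
  have "complexity (translate_subsets (range lac)) n
      \<le> card (single_one_words n \<union> lac_window_words n)"
    unfolding complexity_def using lang_subset_words
    by (intro card_mono) (auto simp: single_one_words_def lac_window_words_def)
  also have "\<dots> \<le> card (single_one_words n) + card (lac_window_words n)"
    by (rule card_Un_le)
  finally show ?thesis using card_single card_lac_window_words[OF assms] assms by linarith
qed

theorem mainTheorem6:
  shows "\<exists>X. subshift X \<and> hereditary X \<and>
           (\<exists>C::real. \<forall>n\<ge>1. real (complexity X n) \<le> C * real n) \<and>
           infinite_coding_dimension X"
proof (intro exI conjI)
  let ?X = "translate_subsets (range lac)"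
  have infinite_A: "infinite (range lac)"
    using strict_mono_imp_inj_on[OF strict_mono_lac] range_inj_infinite by blast
  show "subshift ?X"
    using subshift_translate_subsets[OF infinite_A finite_lac_differences] .
  show "hereditary ?X"
    by (rule hereditary_translate_subsets)
  show "\<forall>n\<ge>1. real (complexity ?X n) \<le> 6 * real n"
    using complexity_translate_subsets_lac by (metis of_nat_le_iff of_nat_mult of_nat_numeral)
  show "infinite_coding_dimension ?X"
    using infinite_coding_dimension_translate_subsets[OF infinite_A] .
qed

end
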